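(* Let $\mathcal{V}$ be a finite vocabulary, $N\ge 2$, and let $U=(t_1,\dots,t_N)$ be a random sequence with values in $\mathcal{V}^N$ and distribution $P$. Fix $t^*\in\mathcal{V}$ and write $\Pr[t_k=t^*]$ for the probability that the $k$-th token equals $t^*$. (1) (Autoregressive training.) With $\mu_c(t^*,U)=\sum_{k=1}^N(N-k)\mathbf{1}\{t_k=t^*\}$ and $\mu_p(t^*,U)=\sum_{k=1}^N(k-1)\mathbf{1}\{t_k=t^*\}$, $$\frac{\mathbb{E}_P[\mu_c(t^*,U)]}{\mathbb{E}_P[\mu_p(t^*,U)]}=\frac{\sum_{k=1}^N(N-k)\Pr[t_k=t^*]}{\sum_{k=1}^N(k-1)\Pr[t_k=t^*]}$$ (whenever the denominator is nonzero), so that this ratio depends on the positional probabilities $\Pr[t_k=t^*]$. (2) (Bidirectional training.) Let $m_1,\dots,m_N$ be i.i.d. Bernoulli random variables with $\Pr[m_k=1]=\rho$, independent of $U$, and set $$\mu_c(t^*,U,m)=\sum_{k=1}^N\mathbf{1}\{t_k=t^*\}\mathbf{1}\{m_k=0\}\sum_{k'\neq k}\mathbf{1}\{m_{k'}=1\},\qquad \mu_p(t^*,U,m)=\sum_{k=1}^N\mathbf{1}\{t_k=t^*\}\mathbf{1}\{m_k=1\}\sum_{k'\neq k}\mathbf{1}\{m_{k'}=0\}.$$ Then (whenever the expectations are nonzero) $$\frac{\mathbb{E}[\mu_c(t^*,U,m)]}{\mathbb{E}[\mu_p(t^*,U,m)]}=1.$$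
   Context: Interpretation: under autoregressive training a token at position $k$ is used as context for the $N-k$ later tokens and is predicted from the $k-1$ earlier tokens, so $\mu_c$ (resp. $\mu_p$) counts the number of tokens predicted by (resp. used to predict) occurrences of $t^*$. Under bidirectional (masked) training, $m_k=1$ means position $k$ is masked (predicted); a token contributes as context only if it is not masked, and a masked token is predicted from the unmasked ones. Expectations in (2) are over both $U$ and the masks. *)

theory Defs
  imports "HOL-Probability.Probability"
begin

(* A sequence U = (t_1,...,t_N) is a function nat => 'v, positions 1..N.
   A mask m = (m_1,...,m_N) is a function nat => bool; m k = True means m_k = 1 (masked). *)

definition ind :: "bool \<Rightarrow> real" where
  "ind b = (if b then 1 else 0)"

definition mu_c_ar :: "nat \<Rightarrow> 'v \<Rightarrow> (nat \<Rightarrow> 'v) \<Rightarrow> real" where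
  "mu_c_ar N t U = (\<Sum>k=1..N. real (N - k) * ind (U k = t))"

definition mu_p_ar :: "nat \<Rightarrow> 'v \<Rightarrow> (nat \<Rightarrow> 'v) \<Rightarrow> real" where
  "mu_p_ar N t U = (\<Sum>k=1..N. real (k - 1) * ind (U k = t))"

definition mu_c_bi :: "nat \<Rightarrow> 'v \<Rightarrow> (nat \<Rightarrow> 'v) \<Rightarrow> (nat \<Rightarrow> bool) \<Rightarrow> real" where
  "mu_c_bi N t U m = (\<Sum>k=1..N. ind (U k = t) * ind (\<not> m k) *
       (\<Sum>k'\<in>{1..N} - {k}. ind (m k')))"

definition mu_p_bi :: "nat \<Rightarrow> 'v \<Rightarrow> (nat \<Rightarrow> 'v) \<Rightarrow> (nat \<Rightarrow> bool) \<Rightarrow> real" where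
  "mu_p_bi N t U m = (\<Sum>k=1..N. ind (U k = t) * ind (m k) *
       (\<Sum>k'\<in>{1..N} - {k}. ind (\<not> m k')))"

definition mask_pmf :: "nat \<Rightarrow> real \<Rightarrow> (nat \<Rightarrow> bool) pmf" where
  "mask_pmf N \<rho> = Pi_pmf {1..N} False (\<lambda>_. bernoulli_pmf \<rho>)"

end

theory Submission
  imports Defs
begin

text \<open>Both parts are linearity of expectation (neither needs \<open>N \<ge> 2\<close>).
  In the bidirectional case the pointwise identity
  \<open>[\<not> m k] [m k'] - [m k] [\<not> m k'] = [m k'] - [m k]\<close> turns \<open>\<mu>\<^sub>c - \<mu>\<^sub>p\<close> into a sum of
  terms \<open>[U k = t] ([m k'] - [m k])\<close>; as the masks are independent of \<open>U\<close> and all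
  Bernoulli(\<open>\<rho>\<close>), each term has expectation \<open>Pr[U k = t] (\<rho> - \<rho>) = 0\<close>.\<close>

lemma ind_nonneg: "0 \<le> ind b"
  by (simp add: ind_def)

lemma ind_le_one: "ind b \<le> 1"
  by (simp add: ind_def)

lemma integrable_measure_pmf_bounded:
  fixes f :: "'a \<Rightarrow> real"
  assumes "\<And>x. \<bar>f x\<bar> \<le> B"
  shows "integrable (measure_pmf M) f"
  by (rule measure_pmf.integrable_const_bound[where B = B]) (simp_all add: assms)

lemma integrable_ind:
  "integrable (measure_pmf M) (\<lambda>x. ind (Q x))"
  by (rule integrable_measure_pmf_bounded[where B = 1]) (simp add: ind_def)

lemma integrable_ind_mult_ind:
  "integrable (measure_pmf M) (\<lambda>x. ind (Q x) * ind (R x))"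
  by (rule integrable_measure_pmf_bounded[where B = 1]) (simp add: ind_def)

lemma integrable_ind_mult_ind_mult_sum_ind:
  "integrable (measure_pmf M) (\<lambda>x. ind (Q x) * ind (R x) * (\<Sum>k\<in>A. ind (S k x)))"
proof (rule integrable_measure_pmf_bounded[where B = "real (card A)"])
  fix x
  have "(\<Sum>k\<in>A. ind (S k x)) \<le> real (card A) * 1"
    by (rule sum_bounded_above) (rule ind_le_one)
  moreover have "0 \<le> (\<Sum>k\<in>A. ind (S k x))"
    by (intro sum_nonneg ind_nonneg)
  ultimately show "\<bar>ind (Q x) * ind (R x) * (\<Sum>k\<in>A. ind (S k x))\<bar> \<le> real (card A)"
    by (simp add: ind_def)
qed

lemma expectation_ind:
  "measure_pmf.expectation M (\<lambda>x. ind (Q x)) = measure_pmf.prob M {x. Q x}"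
proof -
  have "(\<lambda>x. ind (Q x)) = indicator {x. Q x}"
    by (simp add: ind_def fun_eq_iff)
  then show ?thesis
    by simp
qed

lemma expectation_sum_mult_ind:
  "measure_pmf.expectation M (\<lambda>x. \<Sum>k\<in>A. c k * ind (Q k x))
     = (\<Sum>k\<in>A. c k * measure_pmf.prob M {x. Q k x})"
  by (subst Bochner_Integration.integral_sum) (simp_all add: integrable_ind expectation_ind)

lemma map_mask_pmf_component:
  assumes "j \<in> {1..N}"
  shows "map_pmf (\<lambda>m. m j) (mask_pmf N \<rho>) = bernoulli_pmf \<rho>"
  using assms by (simp add: mask_pmf_def Pi_pmf_component)

lemma expectation_token_mask:
  assumes "j \<in> {1..N}" and "0 \<le> \<rho>" and "\<rho> \<le> 1"
  shows "measure_pmf.expectation (pair_pmf P (mask_pmf N \<rho>))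
           (\<lambda>(U, m). ind (U k = t) * ind (m j))
         = measure_pmf.prob P {U. U k = t} * \<rho>"
proof -
  let ?M = "pair_pmf P (mask_pmf N \<rho>)"
  let ?g = "\<lambda>(U, m). (U k, m j)"
  have "(\<lambda>(U, m). ind (U k = t) * ind (m j)) = (\<lambda>x. ind (?g x = (t, True)))"
    by (auto simp: ind_def fun_eq_iff)
  then have "measure_pmf.expectation ?M (\<lambda>(U, m). ind (U k = t) * ind (m j))
      = measure_pmf.prob (map_pmf ?g ?M) {(t, True)}"
    by (simp add: expectation_ind vimage_def)
  also have "map_pmf ?g ?M = pair_pmf (map_pmf (\<lambda>U. U k) P) (bernoulli_pmf \<rho>)"
    using assms(1) by (simp add: map_pair map_mask_pmf_component)
  finally show ?thesis
    using assms(2,3) by (simp add: measure_pmf_single pmf_pair pmf_map vimage_def)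
qed

lemma mu_c_bi_minus_mu_p_bi:
  "mu_c_bi N t U m - mu_p_bi N t U m
     = (\<Sum>k=1..N. \<Sum>k'\<in>{1..N} - {k}.
          ind (U k = t) * ind (m k') - ind (U k = t) * ind (m k))"
  unfolding mu_c_bi_def mu_p_bi_def sum_subtractf[symmetric] sum_distrib_left
  by (intro sum.cong refl) (simp add: ind_def)

lemma expectation_mu_c_bi_eq_mu_p_bi:
  assumes "0 \<le> \<rho>" and "\<rho> \<le> 1"
  shows "measure_pmf.expectation (pair_pmf P (mask_pmf N \<rho>)) (\<lambda>(U, m). mu_c_bi N t U m)
       = measure_pmf.expectation (pair_pmf P (mask_pmf N \<rho>)) (\<lambda>(U, m). mu_p_bi N t U m)"
proof -
  let ?M = "pair_pmf P (mask_pmf N \<rho>)"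
  let ?E = "measure_pmf.expectation ?M"
  let ?tm = "\<lambda>k j. \<lambda>(U, m). ind (U k = t) * ind (m j)"
  have integrable_tm: "integrable ?M (?tm k j)" for k j
    unfolding case_prod_beta by (rule integrable_ind_mult_ind)
  have "integrable ?M (\<lambda>(U, m). mu_c_bi N t U m)"
    unfolding mu_c_bi_def case_prod_beta
    by (intro Bochner_Integration.integrable_sum integrable_ind_mult_ind_mult_sum_ind)
  moreover have "integrable ?M (\<lambda>(U, m). mu_p_bi N t U m)"
    unfolding mu_p_bi_def case_prod_beta
    by (intro Bochner_Integration.integrable_sum integrable_ind_mult_ind_mult_sum_ind)
  ultimately have "?E (\<lambda>(U, m). mu_c_bi N t U m) - ?E (\<lambda>(U, m). mu_p_bi N t U m)
      = ?E (\<lambda>x. \<Sum>k=1..N. \<Sum>k'\<in>{1..N} - {k}. ?tm k k' x - ?tm k k x)"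
    by (simp add: Bochner_Integration.integral_diff[symmetric] case_prod_beta mu_c_bi_minus_mu_p_bi)
  also have "\<dots> = (\<Sum>k=1..N. \<Sum>k'\<in>{1..N} - {k}. ?E (?tm k k') - ?E (?tm k k))"
    by (simp only: Bochner_Integration.integral_sum' Bochner_Integration.integral_diff
        Bochner_Integration.integrable_sum Bochner_Integration.integrable_diff integrable_tm)
  also have "\<dots> = 0"
    using assms by (intro sum.neutral ballI) (simp add: expectation_token_mask)
  finally show ?thesis
    by simp
qed

theorem proposition4:
  fixes P :: "(nat \<Rightarrow> 'v::finite) pmf" and N :: nat and tstar :: 'v and \<rho> :: real
  assumes "N \<ge> 2"
  shows "((\<Sum>k=1..N. real (k - 1) * measure_pmf.prob P {U. U k = tstar}) \<noteq> 0 \<longrightarrow>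
           measure_pmf.expectation P (\<lambda>U. mu_c_ar N tstar U) /
           measure_pmf.expectation P (\<lambda>U. mu_p_ar N tstar U)
         = (\<Sum>k=1..N. real (N - k) * measure_pmf.prob P {U. U k = tstar}) /
           (\<Sum>k=1..N. real (k - 1) * measure_pmf.prob P {U. U k = tstar}))
       \<and>
         ((0 \<le> \<rho> \<and> \<rho> \<le> 1 \<and>
           measure_pmf.expectation (pair_pmf P (mask_pmf N \<rho>)) (\<lambda>(U, m). mu_c_bi N tstar U m) \<noteq> 0 \<and>
           measure_pmf.expectation (pair_pmf P (mask_pmf N \<rho>)) (\<lambda>(U, m). mu_p_bi N tstar U m) \<noteq> 0)
          \<longrightarrow>
           measure_pmf.expectation (pair_pmf P (mask_pmf N \<rho>)) (\<lambda>(U, m). mu_c_bi N tstar U m) /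
           measure_pmf.expectation (pair_pmf P (mask_pmf N \<rho>)) (\<lambda>(U, m). mu_p_bi N tstar U m) = 1)"
proof (intro conjI impI)
  show "measure_pmf.expectation P (\<lambda>U. mu_c_ar N tstar U) /
          measure_pmf.expectation P (\<lambda>U. mu_p_ar N tstar U)
        = (\<Sum>k=1..N. real (N - k) * measure_pmf.prob P {U. U k = tstar}) /
          (\<Sum>k=1..N. real (k - 1) * measure_pmf.prob P {U. U k = tstar})"
    unfolding mu_c_ar_def mu_p_ar_def by (simp only: expectation_sum_mult_ind)
next
  assume "0 \<le> \<rho> \<and> \<rho> \<le> 1 \<and>
    measure_pmf.expectation (pair_pmf P (mask_pmf N \<rho>)) (\<lambda>(U, m). mu_c_bi N tstar U m) \<noteq> 0 \<and>
    measure_pmf.expectation (pair_pmf P (mask_pmf N \<rho>)) (\<lambda>(U, m). mu_p_bi N tstar U m) \<noteq> 0"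
  then show "measure_pmf.expectation (pair_pmf P (mask_pmf N \<rho>)) (\<lambda>(U, m). mu_c_bi N tstar U m) /
      measure_pmf.expectation (pair_pmf P (mask_pmf N \<rho>)) (\<lambda>(U, m). mu_p_bi N tstar U m) = 1"
    by (simp add: expectation_mu_c_bi_eq_mu_p_bi)
qed

end
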